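(* For any pair of positive integers $r_1,r_2$, there exists a strongly connected digraph $G$ such that its inner out-radius is $r^+(G)=r_1$ and its inner in-radius is $r^-(G)=r_2$.
   Context: Digraphs are finite and may have loops and multiple arcs. $\mathrm{dist}_G(u,v)$ is the length of a shortest directed walk from $u$ to $v$ ($\infty$ if none). The inner out-eccentricity of $u$ is $\mathrm{ecc}^+(u)=\max\{\mathrm{dist}_G(u,v): \mathrm{dist}_G(u,v)<\infty\}$ and the inner in-eccentricity is $\mathrm{ecc}^-(u)=\max\{\mathrm{dist}_G(v,u): \mathrm{dist}_G(v,u)<\infty\}$ (maxima over $v\in V(G)$). The inner out-radius is $r^+(G)=\min_{u}\mathrm{ecc}^+(u)$ and the inner in-radius is $r^-(G)=\min_u \mathrm{ecc}^-(u)$. *)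

theory Defs
  imports Main "HOL-Library.Extended_Nat" "Graph_Theory.Graph_Theory"
begin

text \<open>Digraphs are AFP Graph_Theory pre_digraph records (loops and multiple arcs allowed);
  finiteness and well-formedness via fin_digraph.\<close>

definition dg_dist :: "('a,'b) pre_digraph \<Rightarrow> 'a \<Rightarrow> 'a \<Rightarrow> enat" where
  "dg_dist G u v = (INF p \<in> {p. pre_digraph.awalk G u p v}. enat (length p))"

definition ecc_out :: "('a,'b) pre_digraph \<Rightarrow> 'a \<Rightarrow> nat" where
  "ecc_out G u = Max {the_enat (dg_dist G u v) | v. v \<in> verts G \<and> dg_dist G u v < \<infinity>}"

definition ecc_in :: "('a,'b) pre_digraph \<Rightarrow> 'a \<Rightarrow> nat" where
  "ecc_in G u = Max {the_enat (dg_dist G v u) | v. v \<in> verts G \<and> dg_dist G v u < \<infinity>}"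

definition out_radius :: "('a,'b) pre_digraph \<Rightarrow> nat" where
  "out_radius G = Min (ecc_out G ` verts G)"

definition in_radius :: "('a,'b) pre_digraph \<Rightarrow> nat" where
  "in_radius G = Min (ecc_in G ` verts G)"

end

theory Submission
  imports Defs "HOL-Library.Nat_Bijection"
begin

text \<open>For 1 \<le> a \<le> b take the digraph on {0, ..., 2b} formed by the cycle
  0 -> 1 -> ... -> a-1 -> a -> 0, the path 2b -> 2b-1 -> ... -> a, and arcs from a-1 to every
  vertex of that path. Vertex 0 reaches every vertex within a steps, and every vertex reaches b
  within b steps. The matching lower bounds come from potentials: if f y \<le> f x + 1 along every
  arc x -> y, then the distance from u to v is at least f v - f u, and for each vertex a suitable
  piecewise linear f exhibits a vertex at distance at least a from it (resp. at least b to it).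
  Reversing all arcs swaps the two radii, which covers the case r1 > r2.\<close>

lemma relpow_converse: "(R\<inverse>) ^^ k = (R ^^ k)\<inverse>" for R :: "'a rel"
proof (induction k)
  case (Suc k)
  have "(R\<inverse>) ^^ Suc k = (R ^^ k)\<inverse> O R\<inverse>" using Suc by simp
  also have "\<dots> = (R O R ^^ k)\<inverse>" by (rule converse_relcomp[symmetric])
  also have "\<dots> = (R ^^ Suc k)\<inverse>" by (simp only: relpow_commute relpow.simps)
  finally show ?case .
qed simp

lemma relpow_chain:
  assumes "\<And>i. i < m \<Longrightarrow> (f i, f (Suc i)) \<in> R"
  shows "(f 0, f m) \<in> R ^^ m"
  using assms by (induction m) auto

lemma relpow_potential_bound:
  fixes f :: "'a \<Rightarrow> int"
  assumes "\<And>x y. (x, y) \<in> R \<Longrightarrow> f y \<le> f x + 1" and "(u, v) \<in> R ^^ k"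
  shows "f v \<le> f u + int k"
  using assms(2)
proof (induction k arbitrary: v)
  case (Suc k)
  then obtain w where "(u, w) \<in> R ^^ k" "(w, v) \<in> R" by auto
  then show ?case using Suc.IH assms(1) by fastforce
qed simp

definition rel_dist :: "'a rel \<Rightarrow> 'a \<Rightarrow> 'a \<Rightarrow> enat" where
  "rel_dist R u v = (INF k \<in> {k. (u, v) \<in> R ^^ k}. enat k)"

lemma rel_dist_le: "(u, v) \<in> R ^^ k \<Longrightarrow> rel_dist R u v \<le> enat k"
  unfolding rel_dist_def by (rule INF_lower) simp

lemma rel_dist_geI: "(\<And>k. (u, v) \<in> R ^^ k \<Longrightarrow> m \<le> k) \<Longrightarrow> enat m \<le> rel_dist R u v"
  unfolding rel_dist_def by (rule INF_greatest) simp

lemma rel_dist_finite: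
  assumes "(u, v) \<in> R\<^sup>*"
  shows "rel_dist R u v < \<infinity>"
proof -
  obtain k where "(u, v) \<in> R ^^ k" using assms rtrancl_power by blast
  then have "rel_dist R u v \<le> enat k" by (rule rel_dist_le)
  then show ?thesis using le_less_trans by fastforce
qed

lemma rel_dist_converse: "rel_dist (R\<inverse>) u v = rel_dist R v u"
  by (simp add: rel_dist_def relpow_converse)

lemma rel_dist_potential_bound:
  fixes f :: "'a \<Rightarrow> int"
  assumes "\<And>x y. (x, y) \<in> R \<Longrightarrow> f y \<le> f x + 1" and "int m \<le> f v - f u"
  shows "enat m \<le> rel_dist R u v"
proof (rule rel_dist_geI)
  fix k assume "(u, v) \<in> R ^^ k"
  with assms(1) have "f v \<le> f u + int k" by (rule relpow_potential_bound)
  then show "m \<le> k" using assms(2) by linarith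
qed

definition reachable_within :: "'a rel \<Rightarrow> 'a \<Rightarrow> 'a \<Rightarrow> nat \<Rightarrow> bool" where
  "reachable_within R u v m \<longleftrightarrow> (\<exists>k\<le>m. (u, v) \<in> R ^^ k)"

lemma reachable_within_arc: "(u, v) \<in> R \<Longrightarrow> reachable_within R u v 1"
  unfolding reachable_within_def by (intro exI[of _ 1]) auto

lemma reachable_within_chain:
  "(\<And>i. i < m \<Longrightarrow> (f i, f (Suc i)) \<in> R) \<Longrightarrow> reachable_within R (f 0) (f m) m"
  unfolding reachable_within_def using relpow_chain by blast

lemma reachable_within_trans:
  assumes "reachable_within R u w m1" and "reachable_within R w v m2"
  shows "reachable_within R u v (m1 + m2)"
proof -
  obtain k1 k2 where "k1 \<le> m1" "(u, w) \<in> R ^^ k1" "k2 \<le> m2" "(w, v) \<in> R ^^ k2"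
    using assms unfolding reachable_within_def by blast
  then have "k1 + k2 \<le> m1 + m2" "(u, v) \<in> R ^^ (k1 + k2)" by (auto simp: relpow_add)
  then show ?thesis unfolding reachable_within_def by blast
qed

lemma reachable_within_mono:
  "reachable_within R u v m \<Longrightarrow> m \<le> m' \<Longrightarrow> reachable_within R u v m'"
  unfolding reachable_within_def by (meson le_trans)

lemma reachable_within_rtrancl: "reachable_within R u v m \<Longrightarrow> (u, v) \<in> R\<^sup>*"
  unfolding reachable_within_def using rtrancl_power by blast

lemma rel_dist_le_if_reachable_within: "reachable_within R u v m \<Longrightarrow> rel_dist R u v \<le> enat m"
  unfolding reachable_within_def by (meson enat_ord_simps(1) order_trans rel_dist_le)

definition rel_digraph :: "nat set \<Rightarrow> nat rel \<Rightarrow> (nat, nat) pre_digraph" where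
  "rel_digraph V R = \<lparr>verts = V, arcs = prod_encode ` R,
     tail = fst \<circ> prod_decode, head = snd \<circ> prod_decode\<rparr>"

lemma rel_digraph_simps [simp]:
  "verts (rel_digraph V R) = V" "arcs (rel_digraph V R) = prod_encode ` R"
  "tail (rel_digraph V R) = fst \<circ> prod_decode" "head (rel_digraph V R) = snd \<circ> prod_decode"
  by (simp_all add: rel_digraph_def)

lemma wf_digraph_rel_digraph: "R \<subseteq> V \<times> V \<Longrightarrow> wf_digraph (rel_digraph V R)"
  by unfold_locales auto

lemma fin_digraph_rel_digraph:
  assumes "R \<subseteq> V \<times> V" and "finite V"
  shows "fin_digraph (rel_digraph V R)"
proof -
  have "finite R" using assms finite_subset by blast
  then show ?thesis using assms wf_digraph_rel_digraph[OF assms(1)]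
    by (simp add: fin_digraph_def fin_digraph_axioms_def)
qed

lemma rel_digraph_awalk_length_iff:
  assumes "R \<subseteq> V \<times> V"
  shows "(\<exists>p. pre_digraph.awalk (rel_digraph V R) u p v \<and> length p = k) \<longleftrightarrow>
    u \<in> V \<and> (u, v) \<in> R ^^ k"
proof -
  interpret wf_digraph "rel_digraph V R" by (rule wf_digraph_rel_digraph[OF assms])
  show ?thesis
  proof (induction k arbitrary: u)
    case 0
    show ?case by (auto simp: awalk_Nil_iff)
  next
    case (Suc k)
    have "(\<exists>p. awalk u p v \<and> length p = Suc k) \<longleftrightarrow>
        (\<exists>y es. (u, y) \<in> R \<and> awalk y es v \<and> length es = k)"
    proof
      assume "\<exists>y es. (u, y) \<in> R \<and> awalk y es v \<and> length es = k"
      then obtain y es where "(u, y) \<in> R" "awalk y es v" "length es = k" by blast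
      then have "awalk u (prod_encode (u, y) # es) v \<and> length (prod_encode (u, y) # es) = Suc k"
        by (simp add: awalk_Cons_iff)
      then show "\<exists>p. awalk u p v \<and> length p = Suc k" by blast
    qed (fastforce simp: awalk_Cons_iff length_Suc_conv)
    also have "\<dots> \<longleftrightarrow> (\<exists>y. (u, y) \<in> R \<and> (y, v) \<in> R ^^ k)"
      using Suc.IH assms by blast
    also have "\<dots> \<longleftrightarrow> u \<in> V \<and> (u, v) \<in> R ^^ Suc k"
      using assms relpow_Suc_D2[of u v k R] relpow_Suc_I2[of u _ R] by blast
    finally show ?case .
  qed
qed

lemma dg_dist_rel_digraph:
  assumes "R \<subseteq> V \<times> V" and "u \<in> V"
  shows "dg_dist (rel_digraph V R) u v = rel_dist R u v"
proof -
  have "length ` {p. pre_digraph.awalk (rel_digraph V R) u p v} =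
      {k. \<exists>p. pre_digraph.awalk (rel_digraph V R) u p v \<and> length p = k}"
    by blast
  also have "\<dots> = {k. (u, v) \<in> R ^^ k}"
    using rel_digraph_awalk_length_iff[OF assms(1)] assms(2) by simp
  finally have lengths: "length ` {p. pre_digraph.awalk (rel_digraph V R) u p v} = {k. (u, v) \<in> R ^^ k}" .
  show ?thesis
    unfolding dg_dist_def rel_dist_def by (simp add: lengths[symmetric] image_image)
qed

lemma rel_digraph_reachable_iff:
  assumes "R \<subseteq> V \<times> V"
  shows "u \<rightarrow>\<^sup>*\<^bsub>rel_digraph V R\<^esub> v \<longleftrightarrow> u \<in> V \<and> (u, v) \<in> R\<^sup>*"
proof -
  interpret wf_digraph "rel_digraph V R" by (rule wf_digraph_rel_digraph[OF assms])
  show ?thesis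
    using rel_digraph_awalk_length_iff[OF assms] by (metis rtrancl_power reachable_awalk)
qed

lemma strongly_connected_rel_digraph_iff:
  "R \<subseteq> V \<times> V \<Longrightarrow>
    strongly_connected (rel_digraph V R) \<longleftrightarrow> V \<noteq> {} \<and> (\<forall>u\<in>V. \<forall>v\<in>V. (u, v) \<in> R\<^sup>*)"
  by (auto simp: strongly_connected_def rel_digraph_reachable_iff)

lemma Min_Max_eccentricity_eqI:
  fixes D :: "'a \<Rightarrow> 'a \<Rightarrow> enat"
  assumes fin: "finite V" and c: "c \<in> V"
    and center: "\<And>v. v \<in> V \<Longrightarrow> D c v \<le> enat r"
    and far: "\<And>u. u \<in> V \<Longrightarrow> \<exists>v\<in>V. enat r \<le> D u v \<and> D u v < \<infinity>"
  shows "Min ((\<lambda>u. Max {the_enat (D u v) | v. v \<in> V \<and> D u v < \<infinity>}) ` V) = r"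
proof -
  define ecc where "ecc = (\<lambda>u. Max {the_enat (D u v) | v. v \<in> V \<and> D u v < \<infinity>})"
  have fin_ecc: "finite {the_enat (D u v) | v. v \<in> V \<and> D u v < \<infinity>}" for u
    using fin by (simp add: setcompr_eq_image)
  have lower: "r \<le> ecc u" if u: "u \<in> V" for u
  proof -
    obtain v where v: "v \<in> V" "enat r \<le> D u v" "D u v < \<infinity>" using far[OF u] by blast
    then have "r \<le> the_enat (D u v)" by (cases "D u v") auto
    also have "\<dots> \<le> ecc u"
      unfolding ecc_def by (rule Max_ge[OF fin_ecc]) (use v in blast)
    finally show ?thesis .
  qed
  have "ecc c \<le> r"
    unfolding ecc_def
  proof (rule Max.boundedI[OF fin_ecc])
    have "D c c < \<infinity>" using center[OF c] le_less_trans by fastforce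
    then show "{the_enat (D c v) | v. v \<in> V \<and> D c v < \<infinity>} \<noteq> {}" using c by blast
  next
    fix x assume "x \<in> {the_enat (D c v) | v. v \<in> V \<and> D c v < \<infinity>}"
    then obtain v where "v \<in> V" "x = the_enat (D c v)" by blast
    then show "x \<le> r" using center[of v] by (cases "D c v") auto
  qed
  with lower[OF c] have "r \<in> ecc ` V" using c by (metis image_eqI le_antisym)
  then show ?thesis
    unfolding ecc_def[symmetric] using fin lower by (intro Min_eqI) auto
qed

lemma out_radius_rel_digraph_eqI:
  assumes R: "R \<subseteq> V \<times> V" and fin: "finite V" and c: "c \<in> V"
    and center: "\<And>v. v \<in> V \<Longrightarrow> rel_dist R c v \<le> enat r"
    and far: "\<And>u. u \<in> V \<Longrightarrow> \<exists>v\<in>V. enat r \<le> rel_dist R u v \<and> rel_dist R u v < \<infinity>"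
  shows "out_radius (rel_digraph V R) = r"
proof -
  let ?D = "dg_dist (rel_digraph V R)"
  have "Min ((\<lambda>u. Max {the_enat (?D u v) | v. v \<in> V \<and> ?D u v < \<infinity>}) ` V) = r"
  proof (rule Min_Max_eccentricity_eqI[OF fin c])
    show "?D c v \<le> enat r" if "v \<in> V" for v
      using center[OF that] by (simp add: dg_dist_rel_digraph[OF R c])
    show "\<exists>v\<in>V. enat r \<le> ?D u v \<and> ?D u v < \<infinity>" if "u \<in> V" for u
      using far[OF that] by (simp add: dg_dist_rel_digraph[OF R that])
  qed
  then show ?thesis by (simp add: out_radius_def ecc_out_def)
qed

lemma in_radius_rel_digraph_eq_out_radius_converse:
  assumes R: "R \<subseteq> V \<times> V"
  shows "in_radius (rel_digraph V R) = out_radius (rel_digraph V (R\<inverse>))"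
proof -
  have conv: "R\<inverse> \<subseteq> V \<times> V" using R by auto
  have "ecc_in (rel_digraph V R) u = ecc_out (rel_digraph V (R\<inverse>)) u" if u: "u \<in> V" for u
  proof -
    have "dg_dist (rel_digraph V R) v u = dg_dist (rel_digraph V (R\<inverse>)) u v" if "v \<in> V" for v
      by (simp add: dg_dist_rel_digraph[OF R that] dg_dist_rel_digraph[OF conv u] rel_dist_converse)
    then show ?thesis unfolding ecc_in_def ecc_out_def rel_digraph_simps(1)
      by (metis (no_types, lifting))
  qed
  then show ?thesis unfolding in_radius_def out_radius_def rel_digraph_simps(1)
    by (metis (no_types, lifting) image_cong)
qed

lemma rel_digraph_converse:
  assumes "R \<subseteq> V \<times> V" and "finite V" and "strongly_connected (rel_digraph V R)"
  shows "fin_digraph (rel_digraph V (R\<inverse>))" "strongly_connected (rel_digraph V (R\<inverse>))"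
    "out_radius (rel_digraph V (R\<inverse>)) = in_radius (rel_digraph V R)"
    "in_radius (rel_digraph V (R\<inverse>)) = out_radius (rel_digraph V R)"
proof -
  have conv: "R\<inverse> \<subseteq> V \<times> V" using assms(1) by auto
  show "fin_digraph (rel_digraph V (R\<inverse>))" by (rule fin_digraph_rel_digraph[OF conv assms(2)])
  show "strongly_connected (rel_digraph V (R\<inverse>))"
    using assms(3) by (simp add: strongly_connected_rel_digraph_iff assms(1) conv rtrancl_converse)
  show "out_radius (rel_digraph V (R\<inverse>)) = in_radius (rel_digraph V R)"
    by (simp add: in_radius_rel_digraph_eq_out_radius_converse[OF assms(1)])
  show "in_radius (rel_digraph V (R\<inverse>)) = out_radius (rel_digraph V R)"
    by (simp add: in_radius_rel_digraph_eq_out_radius_converse[OF conv])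
qed

definition cycle_fan_arcs :: "nat \<Rightarrow> nat \<Rightarrow> nat rel" where
  "cycle_fan_arcs a b =
     {(x, Suc x) | x. Suc x < a} \<union> {(a - 1, y) | y. a \<le> y \<and> y \<le> 2 * b} \<union>
     {(Suc y, y) | y. a \<le> y \<and> y < 2 * b} \<union> {(a, 0)}"

lemma cycle_fan_arcs_iff:
  "(x, y) \<in> cycle_fan_arcs a b \<longleftrightarrow>
    (y = Suc x \<and> y < a) \<or> (x = a - 1 \<and> a \<le> y \<and> y \<le> 2 * b) \<or>
    (x = Suc y \<and> a \<le> y \<and> y < 2 * b) \<or> (x = a \<and> y = 0)"
  unfolding cycle_fan_arcs_def by blast

context
  fixes a b :: nat
  assumes a_pos: "1 \<le> a" and a_le_b: "a \<le> b"
begin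

lemma cycle_fan_arcs_subset: "cycle_fan_arcs a b \<subseteq> {..2 * b} \<times> {..2 * b}"
  using a_pos a_le_b unfolding cycle_fan_arcs_def by auto

lemma cycle_fan_up:
  assumes "i \<le> j" and "j < a"
  shows "reachable_within (cycle_fan_arcs a b) i j (j - i)"
proof -
  have "(i + k, i + Suc k) \<in> cycle_fan_arcs a b" if "k < j - i" for k
  proof -
    have "i + Suc k < a" using that assms by linarith
    then show ?thesis by (simp add: cycle_fan_arcs_iff)
  qed
  then show ?thesis using reachable_within_chain[of "j - i" "\<lambda>k. i + k"] assms by simp
qed

lemma cycle_fan_down:
  assumes "a \<le> y" and "y \<le> z" and "z \<le> 2 * b"
  shows "reachable_within (cycle_fan_arcs a b) z y (z - y)"
proof -
  have "(z - k, z - Suc k) \<in> cycle_fan_arcs a b" if "k < z - y" for k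
  proof -
    have "z - k = Suc (z - Suc k)" "a \<le> z - Suc k" "z - Suc k < 2 * b"
      using that assms by linarith+
    then show ?thesis unfolding cycle_fan_arcs_iff by blast
  qed
  then show ?thesis using reachable_within_chain[of "z - y" "\<lambda>k. z - k"] assms by simp
qed

lemma cycle_fan_from_0:
  assumes "v \<le> 2 * b"
  shows "reachable_within (cycle_fan_arcs a b) 0 v a"
proof (cases "v < a")
  case True
  then show ?thesis using cycle_fan_up[of 0 v] reachable_within_mono by fastforce
next
  case False
  have "reachable_within (cycle_fan_arcs a b) 0 (a - 1) (a - 1)"
    using cycle_fan_up[of 0 "a - 1"] a_pos by simp
  moreover have "reachable_within (cycle_fan_arcs a b) (a - 1) v 1"
    using False assms by (intro reachable_within_arc) (auto simp: cycle_fan_arcs_iff)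
  ultimately show ?thesis using reachable_within_trans a_pos by fastforce
qed

lemma cycle_fan_to_0:
  assumes "u \<le> 2 * b"
  shows "(u, 0) \<in> (cycle_fan_arcs a b)\<^sup>*"
proof -
  have a0: "(a, 0) \<in> cycle_fan_arcs a b" by (simp add: cycle_fan_arcs_iff)
  show ?thesis
  proof (cases "u < a")
    case True
    have "reachable_within (cycle_fan_arcs a b) u (a - 1) (a - 1 - u)"
      by (rule cycle_fan_up) (use True a_pos in auto)
    then have "(u, a - 1) \<in> (cycle_fan_arcs a b)\<^sup>*" by (rule reachable_within_rtrancl)
    moreover have "(a - 1, a) \<in> cycle_fan_arcs a b"
      using a_pos a_le_b by (auto simp: cycle_fan_arcs_iff)
    ultimately show ?thesis using a0 by (meson rtrancl_into_rtrancl)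
  next
    case False
    then have "(u, a) \<in> (cycle_fan_arcs a b)\<^sup>*"
      using cycle_fan_down[of a u] assms reachable_within_rtrancl by auto
    then show ?thesis using a0 by (meson rtrancl_into_rtrancl)
  qed
qed

lemma cycle_fan_rtrancl:
  "u \<le> 2 * b \<Longrightarrow> v \<le> 2 * b \<Longrightarrow> (u, v) \<in> (cycle_fan_arcs a b)\<^sup>*"
  using cycle_fan_to_0 cycle_fan_from_0 reachable_within_rtrancl by (meson rtrancl_trans)

lemma cycle_fan_out_far:
  assumes "u \<le> 2 * b"
  shows "\<exists>v\<le>2 * b. enat a \<le> rel_dist (cycle_fan_arcs a b) u v"
proof -
  consider "u = 0" | "0 < u" "u < a" | "a \<le> u" by linarith
  then show ?thesis
  proof cases
    case 1
    define p :: "nat \<Rightarrow> int" where "p x = int (min x a)" for x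
    have "enat a \<le> rel_dist (cycle_fan_arcs a b) u a"
      by (rule rel_dist_potential_bound[where f = p])
        (use 1 in \<open>auto simp: cycle_fan_arcs_iff p_def\<close>)
    then show ?thesis using a_le_b by (intro exI[of _ a] conjI) simp_all
  next
    case 2
    define p :: "nat \<Rightarrow> int"
      where "p x = (if x < u then int (a + 1 + x) - u else int (min x a) - u)" for x
    have "enat a \<le> rel_dist (cycle_fan_arcs a b) u (u - 1)"
      by (rule rel_dist_potential_bound[where f = p])
        (use 2 in \<open>auto simp: cycle_fan_arcs_iff p_def\<close>)
    then show ?thesis using assms by (intro exI[of _ "u - 1"]) auto
  next
    case 3
    define p :: "nat \<Rightarrow> int"
      where "p x = (if x < a then int x else int a - 1 - x)" for x
    have "enat a \<le> rel_dist (cycle_fan_arcs a b) u (a - 1)"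
      by (rule rel_dist_potential_bound[where f = p])
        (use 3 a_pos in \<open>auto simp: cycle_fan_arcs_iff p_def\<close>)
    then show ?thesis using a_le_b by (intro exI[of _ "a - 1"]) auto
  qed
qed

lemma cycle_fan_to_center:
  assumes "w \<le> 2 * b"
  shows "reachable_within (cycle_fan_arcs a b) w b b"
proof -
  have fan: "reachable_within (cycle_fan_arcs a b) (a - 1) b 1"
    using a_pos a_le_b by (intro reachable_within_arc) (auto simp: cycle_fan_arcs_iff)
  consider "w < a" | "a \<le> w" "w < b" | "b \<le> w" by linarith
  then show ?thesis
  proof cases
    case 1
    have "reachable_within (cycle_fan_arcs a b) w (a - 1) (a - 1 - w)"
      by (rule cycle_fan_up) (use 1 a_pos in auto)
    from this fan have "reachable_within (cycle_fan_arcs a b) w b (a - 1 - w + 1)"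
      by (rule reachable_within_trans)
    then show ?thesis by (rule reachable_within_mono) (use 1 a_le_b in auto)
  next
    case 2
    have descend: "reachable_within (cycle_fan_arcs a b) w a (w - a)"
      using cycle_fan_down[of a w] 2 by simp
    have return: "reachable_within (cycle_fan_arcs a b) a 0 1"
      by (rule reachable_within_arc) (simp add: cycle_fan_arcs_iff)
    have ascend: "reachable_within (cycle_fan_arcs a b) 0 (a - 1) (a - 1)"
      using cycle_fan_up[of 0 "a - 1"] a_pos by simp
    have "reachable_within (cycle_fan_arcs a b) w b (w - a + 1 + (a - 1) + 1)"
      by (rule reachable_within_trans[OF reachable_within_trans[OF
            reachable_within_trans[OF descend return] ascend] fan])
    then show ?thesis by (rule reachable_within_mono) (use 2 a_pos in auto)
  next
    case 3
    then show ?thesis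
      using cycle_fan_down[of b w] assms a_le_b reachable_within_mono by fastforce
  qed
qed

lemma cycle_fan_in_far:
  assumes "u \<le> 2 * b"
  shows "\<exists>v\<le>2 * b. enat b \<le> rel_dist (cycle_fan_arcs a b) v u"
proof (cases "u \<le> b")
  case True
  define p :: "nat \<Rightarrow> int"
    where "p x = (if x < a then int (2 * b + 1 + x) - a else int (2 * b) - x)" for x
  have "enat b \<le> rel_dist (cycle_fan_arcs a b) (2 * b) u"
    by (rule rel_dist_potential_bound[where f = p])
      (use True a_pos a_le_b in \<open>auto simp: cycle_fan_arcs_iff p_def\<close>)
  then show ?thesis by auto
next
  case False
  define p :: "nat \<Rightarrow> int"
    where "p x = (if x < a then int (u + x) - a else if x < u then int u - 1 - x else int u)" for x
  have "enat b \<le> rel_dist (cycle_fan_arcs a b) (u - 1) u"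
    by (rule rel_dist_potential_bound[where f = p])
      (use False a_pos a_le_b in \<open>auto simp: cycle_fan_arcs_iff p_def\<close>)
  then show ?thesis using assms by (intro exI[of _ "u - 1"]) auto
qed

lemma cycle_fan_properties:
  "fin_digraph (rel_digraph {..2 * b} (cycle_fan_arcs a b))"
  "strongly_connected (rel_digraph {..2 * b} (cycle_fan_arcs a b))"
  "out_radius (rel_digraph {..2 * b} (cycle_fan_arcs a b)) = a"
  "in_radius (rel_digraph {..2 * b} (cycle_fan_arcs a b)) = b"
proof -
  note sub = cycle_fan_arcs_subset
  have sub_conv: "(cycle_fan_arcs a b)\<inverse> \<subseteq> {..2 * b} \<times> {..2 * b}" using sub by auto
  have finite_dist: "rel_dist (cycle_fan_arcs a b) u v < \<infinity>"
    if "u \<in> {..2 * b}" "v \<in> {..2 * b}" for u v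
    by (intro rel_dist_finite cycle_fan_rtrancl) (use that in auto)
  show "fin_digraph (rel_digraph {..2 * b} (cycle_fan_arcs a b))"
    by (rule fin_digraph_rel_digraph[OF sub finite_atMost])
  show "strongly_connected (rel_digraph {..2 * b} (cycle_fan_arcs a b))"
    unfolding strongly_connected_rel_digraph_iff[OF sub] using cycle_fan_rtrancl by auto
  show "out_radius (rel_digraph {..2 * b} (cycle_fan_arcs a b)) = a"
  proof (rule out_radius_rel_digraph_eqI[OF sub finite_atMost])
    show "rel_dist (cycle_fan_arcs a b) 0 v \<le> enat a" if "v \<in> {..2 * b}" for v
      by (rule rel_dist_le_if_reachable_within, rule cycle_fan_from_0) (use that in simp)
    show "\<exists>v\<in>{..2 * b}. enat a \<le> rel_dist (cycle_fan_arcs a b) u v \<and>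
        rel_dist (cycle_fan_arcs a b) u v < \<infinity>" if u: "u \<in> {..2 * b}" for u
    proof -
      obtain v where "v \<in> {..2 * b}" "enat a \<le> rel_dist (cycle_fan_arcs a b) u v"
        using cycle_fan_out_far u by auto
      then show ?thesis using finite_dist[OF u] by blast
    qed
  qed simp
  have "out_radius (rel_digraph {..2 * b} ((cycle_fan_arcs a b)\<inverse>)) = b"
  proof (rule out_radius_rel_digraph_eqI[OF sub_conv finite_atMost])
    show "rel_dist ((cycle_fan_arcs a b)\<inverse>) b v \<le> enat b" if "v \<in> {..2 * b}" for v
      unfolding rel_dist_converse
      by (rule rel_dist_le_if_reachable_within, rule cycle_fan_to_center) (use that in simp)
    show "\<exists>v\<in>{..2 * b}. enat b \<le> rel_dist ((cycle_fan_arcs a b)\<inverse>) u v \<and>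
        rel_dist ((cycle_fan_arcs a b)\<inverse>) u v < \<infinity>" if u: "u \<in> {..2 * b}" for u
    proof -
      obtain v where "v \<in> {..2 * b}" "enat b \<le> rel_dist (cycle_fan_arcs a b) v u"
        using cycle_fan_in_far u by auto
      then show ?thesis using finite_dist[OF _ u] unfolding rel_dist_converse by blast
    qed
  qed (use a_le_b in simp)
  then show "in_radius (rel_digraph {..2 * b} (cycle_fan_arcs a b)) = b"
    by (simp add: in_radius_rel_digraph_eq_out_radius_converse[OF sub])
qed

end

theorem proposition2p5:
  fixes r1 r2 :: nat
  assumes "r1 > 0" and "r2 > 0"
  shows "\<exists>G :: (nat, nat) pre_digraph.
           fin_digraph G \<and> strongly_connected G \<and>
           out_radius G = r1 \<and> in_radius G = r2"
proof (cases "r1 \<le> r2")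
  case True
  with assms have "1 \<le> r1" by simp
  note G = cycle_fan_properties[OF this True]
  show ?thesis using G by (intro exI[of _ "rel_digraph {..2 * r2} (cycle_fan_arcs r1 r2)"]) simp
next
  case False
  with assms have r: "1 \<le> r2" "r2 \<le> r1" by simp_all
  note G = cycle_fan_properties[OF r]
  note G_converse = rel_digraph_converse[OF cycle_fan_arcs_subset[OF r] finite_atMost G(2)]
  show ?thesis using G G_converse
    by (intro exI[of _ "rel_digraph {..2 * r1} ((cycle_fan_arcs r2 r1)\<inverse>)"]) simp
qed

end
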